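(* Let $\Omega$ be a semigroup and let $(D, \{ \prec_\alpha, \succ_\alpha, \curlyvee_{\alpha, \beta} \}_{\alpha, \beta \in \Omega})$ be an NS-family algebra over a field $\mathbf{k}$. Define bilinear operations on $D \otimes \mathbf{k}\Omega$ by $$(x \otimes \alpha) \prec (y \otimes \beta) := (x \prec_\beta y ) \otimes \alpha \beta, \quad (x \otimes \alpha) \succ (y \otimes \beta) := (x \succ_\alpha y) \otimes \alpha \beta, \quad (x \otimes \alpha) \curlyvee (y \otimes \beta) := (x \curlyvee_{\alpha, \beta} y) \otimes \alpha \beta,$$ for $x,y\in D$, $\alpha,\beta\in\Omega$ (extended bilinearly). Then $(D \otimes \mathbf{k}\Omega, \prec, \succ, \curlyvee)$ is an NS-algebra. Further, if $f : D \to D'$ is a morphism of NS-family algebras from $(D, \{ \prec_\alpha, \succ_\alpha, \curlyvee_{\alpha, \beta} \})$ to $(D', \{ \prec'_\alpha, \succ'_\alpha, \curlyvee'_{\alpha, \beta} \})$, then the linear map $F : D \otimes \mathbf{k}\Omega \to D' \otimes \mathbf{k}\Omega$, $F(x \otimes \alpha) = f(x) \otimes \alpha$, is a morphism between the induced NS-algebras (i.e. it preserves $\prec,\succ,\curlyvee$).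
   Context: $\mathbf{k}$ is a field of characteristic $0$, $\Omega$ a semigroup and $\mathbf{k}\Omega$ its semigroup algebra (vector space with basis $\Omega$). An NS-algebra is a vector space $D$ with bilinear maps $\prec,\succ,\curlyvee: D\otimes D\to D$ such that for all $x,y,z$: $(x \prec y) \prec z = x \prec ( y \prec z + y \succ z + y \curlyvee z)$; $(x \succ y) \prec z = x \succ (y \prec z)$; $(x \prec y + x \succ y + x \curlyvee y) \succ z = x \succ (y \succ z)$; $( x \prec y + x \succ y + x \curlyvee y ) \curlyvee z + (x \curlyvee y) \prec z = x \succ (y \curlyvee z) + x \curlyvee ( y \prec z + y \succ z + y \curlyvee z )$. An NS-family algebra is a vector space $D$ with bilinear maps $\{ \prec_\alpha, \succ_\alpha, \curlyvee_{\alpha, \beta} : D \otimes D \to D \}_{\alpha, \beta \in \Omega}$ such that for all $x,y,z\in D$, $\alpha,\beta,\gamma\in\Omega$: (1) $(x \prec_\alpha y) \prec_\beta z = x \prec_{\alpha \beta} ( y \prec_\beta z + y \succ_\alpha z + y \curlyvee_{\alpha, \beta} z)$; (2) $(x \succ_\alpha y) \prec_\beta z = x \succ_\alpha (y \prec_\beta z)$; (3) $(x \prec_\beta y + x \succ_\alpha y + x \curlyvee_{\alpha, \beta} y) \succ_{\alpha \beta} z = x \succ_\alpha (y \succ_\beta z)$; (4) $( x \prec_\beta y + x \succ_\alpha y + x \curlyvee_{\alpha, \beta} y ) \curlyvee_{\alpha \beta, \gamma} z + (x \curlyvee_{\alpha, \beta} y) \prec_\gamma z = x \succ_\alpha (y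 \curlyvee_{\beta, \gamma} z) + x \curlyvee_{\alpha, \beta \gamma} ( y \prec_\gamma z + y \succ_\beta z + y \curlyvee_{\beta, \gamma} z )$. A morphism of NS-family algebras is a linear map $f$ with $f(x\prec_\alpha y)=f(x)\prec'_\alpha f(y)$, $f(x\succ_\alpha y)=f(x)\succ'_\alpha f(y)$, $f(x\curlyvee_{\alpha,\beta} y)=f(x)\curlyvee'_{\alpha,\beta} f(y)$ for all $x,y,\alpha,\beta$. *)

theory Defs
  imports "HOL-Analysis.Analysis" "HOL-Library.Poly_Mapping"
begin

definition bilinear_map :: "('k::field \<Rightarrow> 'd::ab_group_add \<Rightarrow> 'd) \<Rightarrow> ('d \<Rightarrow> 'd \<Rightarrow> 'd) \<Rightarrow> bool" where
  "bilinear_map s op \<longleftrightarrow>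
     (\<forall>x. Vector_Spaces.linear s s (op x)) \<and> (\<forall>y. Vector_Spaces.linear s s (\<lambda>x. op x y))"

text \<open>NS-algebra: L = prec, R = succ, V = curlyvee.\<close>
definition NS_algebra ::
  "('k::field \<Rightarrow> 'd::ab_group_add \<Rightarrow> 'd) \<Rightarrow> ('d \<Rightarrow> 'd \<Rightarrow> 'd) \<Rightarrow> ('d \<Rightarrow> 'd \<Rightarrow> 'd) \<Rightarrow> ('d \<Rightarrow> 'd \<Rightarrow> 'd) \<Rightarrow> bool" where
  "NS_algebra s L R V \<longleftrightarrow>
     vector_space s \<and> bilinear_map s L \<and> bilinear_map s R \<and> bilinear_map s V \<and>
     (\<forall>x y z. L (L x y) z = L x (L y z + R y z + V y z)) \<and>
     (\<forall>x y z. L (R x y) z = R x (L y z)) \<and>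
     (\<forall>x y z. R (L x y + R x y + V x y) z = R x (R y z)) \<and>
     (\<forall>x y z. V (L x y + R x y + V x y) z + L (V x y) z
              = R x (V y z) + V x (L y z + R y z + V y z))"

text \<open>NS-family algebra: L a x y = x prec_a y, R a x y = x succ_a y,
  V a b x y = x curlyvee_{a,b} y.\<close>
definition NS_family_algebra ::
  "('k::field \<Rightarrow> 'd::ab_group_add \<Rightarrow> 'd) \<Rightarrow> ('o::semigroup_mult \<Rightarrow> 'd \<Rightarrow> 'd \<Rightarrow> 'd)
    \<Rightarrow> ('o \<Rightarrow> 'd \<Rightarrow> 'd \<Rightarrow> 'd) \<Rightarrow> ('o \<Rightarrow> 'o \<Rightarrow> 'd \<Rightarrow> 'd \<Rightarrow> 'd) \<Rightarrow> bool" where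
  "NS_family_algebra s L R V \<longleftrightarrow>
     vector_space s \<and>
     (\<forall>a. bilinear_map s (L a)) \<and> (\<forall>a. bilinear_map s (R a)) \<and> (\<forall>a b. bilinear_map s (V a b)) \<and>
     (\<forall>x y z a b. L b (L a x y) z = L (a * b) x (L b y z + R a y z + V a b y z)) \<and>
     (\<forall>x y z a b. L b (R a x y) z = R a x (L b y z)) \<and>
     (\<forall>x y z a b. R (a * b) (L b x y + R a x y + V a b x y) z = R a x (R b y z)) \<and>
     (\<forall>x y z a b c. V (a * b) c (L b x y + R a x y + V a b x y) z + L c (V a b x y) z
                     = R a x (V b c y z) + V a (b * c) x (L c y z + R b y z + V b c y z))"

definition NS_family_morphism ::
  "('k::field \<Rightarrow> 'd::ab_group_add \<Rightarrow> 'd) \<Rightarrow> ('k \<Rightarrow> 'e::ab_group_add \<Rightarrow> 'e) \<Rightarrow> ('d \<Rightarrow> 'e)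
    \<Rightarrow> ('o::semigroup_mult \<Rightarrow> 'd \<Rightarrow> 'd \<Rightarrow> 'd) \<Rightarrow> ('o \<Rightarrow> 'd \<Rightarrow> 'd \<Rightarrow> 'd) \<Rightarrow> ('o \<Rightarrow> 'o \<Rightarrow> 'd \<Rightarrow> 'd \<Rightarrow> 'd)
    \<Rightarrow> ('o \<Rightarrow> 'e \<Rightarrow> 'e \<Rightarrow> 'e) \<Rightarrow> ('o \<Rightarrow> 'e \<Rightarrow> 'e \<Rightarrow> 'e) \<Rightarrow> ('o \<Rightarrow> 'o \<Rightarrow> 'e \<Rightarrow> 'e \<Rightarrow> 'e) \<Rightarrow> bool" where
  "NS_family_morphism s s' f L R V L' R' V' \<longleftrightarrow>
     Vector_Spaces.linear s s' f \<and>
     (\<forall>x y a. f (L a x y) = L' a (f x) (f y)) \<and>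
     (\<forall>x y a. f (R a x y) = R' a (f x) (f y)) \<and>
     (\<forall>x y a b. f (V a b x y) = V' a b (f x) (f y))"

definition NS_morphism ::
  "('k::field \<Rightarrow> 'd::ab_group_add \<Rightarrow> 'd) \<Rightarrow> ('k \<Rightarrow> 'e::ab_group_add \<Rightarrow> 'e) \<Rightarrow> ('d \<Rightarrow> 'e)
    \<Rightarrow> ('d \<Rightarrow> 'd \<Rightarrow> 'd) \<Rightarrow> ('d \<Rightarrow> 'd \<Rightarrow> 'd) \<Rightarrow> ('d \<Rightarrow> 'd \<Rightarrow> 'd)
    \<Rightarrow> ('e \<Rightarrow> 'e \<Rightarrow> 'e) \<Rightarrow> ('e \<Rightarrow> 'e \<Rightarrow> 'e) \<Rightarrow> ('e \<Rightarrow> 'e \<Rightarrow> 'e) \<Rightarrow> bool" where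
  "NS_morphism s s' f L R V L' R' V' \<longleftrightarrow>
     Vector_Spaces.linear s s' f \<and>
     (\<forall>x y. f (L x y) = L' (f x) (f y)) \<and>
     (\<forall>x y. f (R x y) = R' (f x) (f y)) \<and>
     (\<forall>x y. f (V x y) = V' (f x) (f y))"

text \<open>D \<otimes> k\<Omega> is modelled as the finitely supported functions from Omega to D (type o =>0 d);
  the pure tensor x \<otimes> \<alpha> is Poly_Mapping.single \<alpha> x.\<close>

definition tscale :: "('k \<Rightarrow> 'd::zero \<Rightarrow> 'd) \<Rightarrow> 'k \<Rightarrow> ('o \<Rightarrow>\<^sub>0 'd) \<Rightarrow> ('o \<Rightarrow>\<^sub>0 'd)" where
  "tscale s c u = Poly_Mapping.map (s c) u"

text \<open>Bilinear extension of (x \<otimes> a) op (y \<otimes> b) = (P a b x y) \<otimes> ab.\<close>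
definition tens_op :: "('o::semigroup_mult \<Rightarrow> 'o \<Rightarrow> 'd \<Rightarrow> 'd \<Rightarrow> 'd::comm_monoid_add)
    \<Rightarrow> ('o \<Rightarrow>\<^sub>0 'd) \<Rightarrow> ('o \<Rightarrow>\<^sub>0 'd) \<Rightarrow> ('o \<Rightarrow>\<^sub>0 'd)" where
  "tens_op P u v = (\<Sum>a\<in>Poly_Mapping.keys u. \<Sum>b\<in>Poly_Mapping.keys v. Poly_Mapping.single (a * b) (P a b (Poly_Mapping.lookup u a) (Poly_Mapping.lookup v b)))"

definition tens_prec :: "('o::semigroup_mult \<Rightarrow> 'd \<Rightarrow> 'd \<Rightarrow> 'd::comm_monoid_add) \<Rightarrow> ('o \<Rightarrow>\<^sub>0 'd) \<Rightarrow> ('o \<Rightarrow>\<^sub>0 'd) \<Rightarrow> ('o \<Rightarrow>\<^sub>0 'd)" where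
  "tens_prec L = tens_op (\<lambda>a b x y. L b x y)"

definition tens_succ :: "('o::semigroup_mult \<Rightarrow> 'd \<Rightarrow> 'd \<Rightarrow> 'd::comm_monoid_add) \<Rightarrow> ('o \<Rightarrow>\<^sub>0 'd) \<Rightarrow> ('o \<Rightarrow>\<^sub>0 'd) \<Rightarrow> ('o \<Rightarrow>\<^sub>0 'd)" where
  "tens_succ R = tens_op (\<lambda>a b x y. R a x y)"

definition tens_vee :: "('o::semigroup_mult \<Rightarrow> 'o \<Rightarrow> 'd \<Rightarrow> 'd \<Rightarrow> 'd::comm_monoid_add) \<Rightarrow> ('o \<Rightarrow>\<^sub>0 'd) \<Rightarrow> ('o \<Rightarrow>\<^sub>0 'd) \<Rightarrow> ('o \<Rightarrow>\<^sub>0 'd)" where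
  "tens_vee V = tens_op V"

definition tens_map :: "('d::zero \<Rightarrow> 'e::zero) \<Rightarrow> ('o \<Rightarrow>\<^sub>0 'd) \<Rightarrow> ('o \<Rightarrow>\<^sub>0 'e)" where
  "tens_map f u = Poly_Mapping.map f u"

end

theory Submission
  imports Defs
begin

text \<open>On pure tensors both sides of each NS identity for \<open>D \<otimes> k\<Omega>\<close>, evaluated at
  \<open>x \<otimes> \<alpha>\<close>, \<open>y \<otimes> \<beta>\<close>, \<open>z \<otimes> \<gamma>\<close>, have the form \<open>w \<otimes> \<alpha>\<beta>\<gamma>\<close> (by associativity of \<open>\<Omega>\<close>), and the
  two coefficients \<open>w\<close> agree by the corresponding NS-family identity at \<open>(\<alpha>, \<beta>)\<close> or
  \<open>(\<alpha>, \<beta>, \<gamma>)\<close>. Expanding arbitrary elements along their finite supports, both sides become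
  triple sums over the supports that agree summand by summand. Similarly, \<open>F\<close> is a morphism
  because on pure tensors it maps \<open>(x \<circ> y) \<otimes> \<alpha>\<beta>\<close> to \<open>(f x \<circ>' f y) \<otimes> \<alpha>\<beta>\<close> for each family
  operation \<open>\<circ>\<close>.\<close>

lemma lookup_map: "g 0 = 0 \<Longrightarrow> Poly_Mapping.lookup (Poly_Mapping.map g p) k = g (Poly_Mapping.lookup p k)"
  by transfer (auto simp: when_def)

lemma keys_map_subset: "Poly_Mapping.keys (Poly_Mapping.map g p) \<subseteq> Poly_Mapping.keys p"
  by transfer (auto simp: when_def)

lemma additive_map:
  assumes "Modules.additive g"
  shows "Modules.additive (Poly_Mapping.map g)"
  by unfold_locales
    (simp add: poly_mapping_eqI lookup_map additive.zero[OF assms] additive.add[OF assms] lookup_add)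

definition biadditive :: "('a::ab_group_add \<Rightarrow> 'b::ab_group_add \<Rightarrow> 'c::ab_group_add) \<Rightarrow> bool" where
  "biadditive op \<longleftrightarrow> (\<forall>x. Modules.additive (op x)) \<and> (\<forall>y. Modules.additive (\<lambda>x. op x y))"

lemma biadditive_add:
  assumes "biadditive op"
  shows "op (x + y) z = op x z + op y z" and "op x (y + z) = op x y + op x z"
  using assms additive.add unfolding biadditive_def by fastforce+

lemma biadditive_zero:
  assumes "biadditive op"
  shows "op 0 y = 0" and "op x 0 = 0"
  using assms additive.zero unfolding biadditive_def by fastforce+

lemma bilinear_map_imp_biadditive: "bilinear_map s op \<Longrightarrow> biadditive op"
  unfolding bilinear_map_def biadditive_def Vector_Spaces.linear_iff by (auto intro: additive.intro)

lemma additive_scale: "vector_space s \<Longrightarrow> Modules.additive (s c)"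
  by (intro additive.intro vector_space.vector_space_assms(1))

lemma additive_tscale: "vector_space s \<Longrightarrow> Modules.additive (tscale s c)"
  unfolding tscale_def by (intro additive_map additive_scale)

lemma lookup_tscale:
  "vector_space s \<Longrightarrow> Poly_Mapping.lookup (tscale s c u) a = s c (Poly_Mapping.lookup u a)"
  unfolding tscale_def by (simp add: lookup_map additive.zero[OF additive_scale])

lemma vector_space_tscale:
  assumes "vector_space s"
  shows "vector_space (tscale s)"
proof -
  interpret vector_space s by fact
  show ?thesis
    by unfold_locales
      (auto intro!: poly_mapping_eqI simp: tscale_def lookup_map lookup_add algebra_simps)
qed

lemma tens_op_eq_sum_over:
  assumes P: "\<And>a b. biadditive (P a b)"
    and A: "finite A" "Poly_Mapping.keys u \<subseteq> A" and B: "finite B" "Poly_Mapping.keys v \<subseteq> B"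
  shows "tens_op P u v = (\<Sum>a\<in>A. \<Sum>b\<in>B.
           Poly_Mapping.single (a * b) (P a b (Poly_Mapping.lookup u a) (Poly_Mapping.lookup v b)))"
  unfolding tens_op_def
  using A B by (intro sum.mono_neutral_cong_left sum.mono_neutral_right)
    (auto simp: biadditive_zero[OF P] not_in_keys_iff_lookup_eq_zero)

lemma additive_tens_op_left:
  fixes P :: "'o::semigroup_mult \<Rightarrow> 'o \<Rightarrow> 'd::ab_group_add \<Rightarrow> 'd \<Rightarrow> 'd"
  assumes P: "\<And>a b. biadditive (P a b)"
  shows "Modules.additive (\<lambda>u. tens_op P u v)"
proof
  fix u1 u2 :: "'o \<Rightarrow>\<^sub>0 'd"
  let ?A = "Poly_Mapping.keys u1 \<union> Poly_Mapping.keys u2" and ?B = "Poly_Mapping.keys v"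
  have "tens_op P u v = (\<Sum>a\<in>?A. \<Sum>b\<in>?B.
          Poly_Mapping.single (a * b) (P a b (Poly_Mapping.lookup u a) (Poly_Mapping.lookup v b)))"
    if "Poly_Mapping.keys u \<subseteq> ?A" for u
    using that by (intro tens_op_eq_sum_over P) auto
  then show "tens_op P (u1 + u2) v = tens_op P u1 v + tens_op P u2 v"
    using keys_add[of u1 u2]
    by (simp add: lookup_add biadditive_add[OF P] single_add sum.distrib)
qed

lemma additive_tens_op_right:
  fixes P :: "'o::semigroup_mult \<Rightarrow> 'o \<Rightarrow> 'd::ab_group_add \<Rightarrow> 'd \<Rightarrow> 'd"
  assumes P: "\<And>a b. biadditive (P a b)"
  shows "Modules.additive (tens_op P u)"
proof
  fix v1 v2 :: "'o \<Rightarrow>\<^sub>0 'd"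
  let ?A = "Poly_Mapping.keys u" and ?B = "Poly_Mapping.keys v1 \<union> Poly_Mapping.keys v2"
  have "tens_op P u v = (\<Sum>a\<in>?A. \<Sum>b\<in>?B.
          Poly_Mapping.single (a * b) (P a b (Poly_Mapping.lookup u a) (Poly_Mapping.lookup v b)))"
    if "Poly_Mapping.keys v \<subseteq> ?B" for v
    using that by (intro tens_op_eq_sum_over P) auto
  then show "tens_op P u (v1 + v2) = tens_op P u v1 + tens_op P u v2"
    using keys_add[of v1 v2]
    by (simp add: lookup_add biadditive_add[OF P] single_add sum.distrib)
qed

lemma tens_op_add_left:
  "(\<And>a b. biadditive (P a b)) \<Longrightarrow> tens_op P (u1 + u2) v = tens_op P u1 v + tens_op P u2 v"
  by (rule additive.add[OF additive_tens_op_left])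

lemma tens_op_add_right:
  "(\<And>a b. biadditive (P a b)) \<Longrightarrow> tens_op P u (v1 + v2) = tens_op P u v1 + tens_op P u v2"
  by (rule additive.add[OF additive_tens_op_right])

lemma tens_op_single_left:
  assumes P: "\<And>a b. biadditive (P a b)"
  shows "tens_op P (Poly_Mapping.single a x) w =
           (\<Sum>c\<in>Poly_Mapping.keys w. Poly_Mapping.single (a * c) (P a c x (Poly_Mapping.lookup w c)))"
  by (subst tens_op_eq_sum_over[OF P, of "{a}" _ "Poly_Mapping.keys w"]) auto

lemma tens_op_single_right:
  assumes P: "\<And>a b. biadditive (P a b)"
  shows "tens_op P u (Poly_Mapping.single c z) =
           (\<Sum>a\<in>Poly_Mapping.keys u. Poly_Mapping.single (a * c) (P a c (Poly_Mapping.lookup u a) z))"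
  by (subst tens_op_eq_sum_over[OF P, of "Poly_Mapping.keys u" _ "{c}"]) auto

definition tens_sum3 ::
  "('o::semigroup_mult \<Rightarrow>\<^sub>0 'd::zero) \<Rightarrow> ('o \<Rightarrow>\<^sub>0 'd) \<Rightarrow> ('o \<Rightarrow>\<^sub>0 'd) \<Rightarrow> ('o \<Rightarrow> 'o \<Rightarrow> 'o \<Rightarrow> 'e)
     \<Rightarrow> ('o \<Rightarrow>\<^sub>0 'e::comm_monoid_add)" where
  "tens_sum3 u v w g = (\<Sum>a\<in>Poly_Mapping.keys u. \<Sum>b\<in>Poly_Mapping.keys v. \<Sum>c\<in>Poly_Mapping.keys w.
     Poly_Mapping.single (a * b * c) (g a b c))"

lemma tens_sum3_add: "tens_sum3 u v w g + tens_sum3 u v w h = tens_sum3 u v w (\<lambda>a b c. g a b c + h a b c)"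
  by (simp add: tens_sum3_def sum.distrib single_add)

lemma tens_op_tens_op_left:
  assumes P: "\<And>a b. biadditive (P a b)"
  shows "tens_op P (tens_op Q u v) w = tens_sum3 u v w (\<lambda>a b c.
           P (a * b) c (Q a b (Poly_Mapping.lookup u a) (Poly_Mapping.lookup v b)) (Poly_Mapping.lookup w c))"
  unfolding tens_op_def[of Q] tens_sum3_def
  by (simp add: additive.sum[OF additive_tens_op_left[OF P]] tens_op_single_left[OF P])

lemma tens_op_tens_op_right:
  assumes P: "\<And>a b. biadditive (P a b)"
  shows "tens_op P u (tens_op Q v w) = tens_sum3 u v w (\<lambda>a b c.
           P a (b * c) (Poly_Mapping.lookup u a) (Q b c (Poly_Mapping.lookup v b) (Poly_Mapping.lookup w c)))"
  unfolding tens_op_def[of Q] tens_sum3_def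
  by (simp add: additive.sum[OF additive_tens_op_right[OF P]] tens_op_single_right[OF P] mult.assoc
      sum.swap[of _ "Poly_Mapping.keys u"])

lemma tens_op_tscale_left:
  assumes s: "vector_space s" and P: "\<And>a b. bilinear_map s (P a b)"
  shows "tens_op P (tscale s c u) v = tscale s c (tens_op P u v)"
proof -
  interpret vector_space s by fact
  have "tens_op P (tscale s c u) v = (\<Sum>a\<in>Poly_Mapping.keys u. \<Sum>b\<in>Poly_Mapping.keys v.
          Poly_Mapping.single (a * b) (P a b (Poly_Mapping.lookup (tscale s c u) a) (Poly_Mapping.lookup v b)))"
    using P by (intro tens_op_eq_sum_over bilinear_map_imp_biadditive)
      (auto simp: tscale_def intro: keys_map_subset[THEN subsetD])
  also have "\<dots> = tscale s c (tens_op P u v)"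
    using P unfolding tens_op_def bilinear_map_def Vector_Spaces.linear_iff
    by (simp add: additive.sum[OF additive_tscale[OF s]] lookup_tscale[OF s]) (simp add: tscale_def)
  finally show ?thesis .
qed

lemma tens_op_tscale_right:
  assumes s: "vector_space s" and P: "\<And>a b. bilinear_map s (P a b)"
  shows "tens_op P u (tscale s c v) = tscale s c (tens_op P u v)"
proof -
  interpret vector_space s by fact
  have "tens_op P u (tscale s c v) = (\<Sum>a\<in>Poly_Mapping.keys u. \<Sum>b\<in>Poly_Mapping.keys v.
          Poly_Mapping.single (a * b) (P a b (Poly_Mapping.lookup u a) (Poly_Mapping.lookup (tscale s c v) b)))"
    using P by (intro tens_op_eq_sum_over bilinear_map_imp_biadditive)
      (auto simp: tscale_def intro: keys_map_subset[THEN subsetD])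
  also have "\<dots> = tscale s c (tens_op P u v)"
    using P unfolding tens_op_def bilinear_map_def Vector_Spaces.linear_iff
    by (simp add: additive.sum[OF additive_tscale[OF s]] lookup_tscale[OF s]) (simp add: tscale_def)
  finally show ?thesis .
qed

lemma bilinear_map_tens_op:
  assumes s: "vector_space s" and P: "\<And>a b. bilinear_map s (P a b)"
  shows "bilinear_map (tscale s) (tens_op P)"
proof -
  have B: "\<And>a b. biadditive (P a b)"
    using P by (rule bilinear_map_imp_biadditive)
  show ?thesis
    using vector_space_tscale[OF s] tens_op_tscale_left[where P = P, OF s P] tens_op_tscale_right[where P = P, OF s P]
      additive.add[OF additive_tens_op_left[where P = P, OF B]]
      additive.add[OF additive_tens_op_right[where P = P, OF B]]
    unfolding bilinear_map_def Vector_Spaces.linear_iff by simp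
qed

lemma linear_tens_map:
  assumes f: "Vector_Spaces.linear s s' f"
  shows "Vector_Spaces.linear (tscale s) (tscale s') (tens_map f)"
proof -
  have s: "vector_space s" and s': "vector_space s'" and f_add: "Modules.additive f"
    and f_scale: "\<And>c x. f (s c x) = s' c (f x)"
    using f unfolding Vector_Spaces.linear_iff by (auto intro: additive.intro)
  show ?thesis
    unfolding Vector_Spaces.linear_iff
  proof (intro conjI allI vector_space_tscale s s')
    show "tens_map f (u + v) = tens_map f u + tens_map f v" for u v
      unfolding tens_map_def by (rule additive.add[OF additive_map[OF f_add]])
    show "tens_map f (tscale s c u) = tscale s' c (tens_map f u)" for c u
      by (rule poly_mapping_eqI) (simp add: tens_map_def lookup_map additive.zero[OF f_add]
          lookup_tscale[OF s] lookup_tscale[OF s'] f_scale)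
  qed
qed

lemma tens_map_tens_op:
  assumes f: "Modules.additive f" and P': "\<And>a b. biadditive (P' a b)"
    and hom: "\<And>a b x y. f (P a b x y) = P' a b (f x) (f y)"
  shows "tens_map f (tens_op P u v) = tens_op P' (tens_map f u) (tens_map f v)"
proof -
  have "tens_op P' (tens_map f u) (tens_map f v) = (\<Sum>a\<in>Poly_Mapping.keys u. \<Sum>b\<in>Poly_Mapping.keys v.
          Poly_Mapping.single (a * b)
            (P' a b (Poly_Mapping.lookup (tens_map f u) a) (Poly_Mapping.lookup (tens_map f v) b)))"
    by (intro tens_op_eq_sum_over P') (auto simp: tens_map_def intro: keys_map_subset[THEN subsetD])
  then show ?thesis
    by (simp add: tens_map_def tens_op_def additive.sum[OF additive_map[OF f]] lookup_map
        additive.zero[OF f] hom)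
qed

lemma NS_algebra_tens:
  assumes "NS_family_algebra s L R V"
  shows "NS_algebra (tscale s) (tens_prec L) (tens_succ R) (tens_vee V)"
proof -
  have s: "vector_space s" and bL: "\<And>a. bilinear_map s (L a)" and bR: "\<And>a. bilinear_map s (R a)"
    and bV: "\<And>a b. bilinear_map s (V a b)"
    and prec_prec: "\<And>x y z a b. L b (L a x y) z = L (a * b) x (L b y z + R a y z + V a b y z)"
    and succ_prec: "\<And>x y z a b. L b (R a x y) z = R a x (L b y z)"
    and succ_succ: "\<And>x y z a b. R (a * b) (L b x y + R a x y + V a b x y) z = R a x (R b y z)"
    and vee: "\<And>x y z a b c. V (a * b) c (L b x y + R a x y + V a b x y) z + L c (V a b x y) z
                     = R a x (V b c y z) + V a (b * c) x (L c y z + R b y z + V b c y z)"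
    using assms unfolding NS_family_algebra_def by simp_all
  have L_add: "\<And>a. biadditive (L a)" and R_add: "\<And>a. biadditive (R a)"
    and V_add: "\<And>a b. biadditive (V a b)"
    using bL bR bV by (blast intro: bilinear_map_imp_biadditive)+
  note expand = tens_op_tens_op_left tens_op_tens_op_right tens_op_add_left tens_op_add_right
    tens_sum3_add L_add R_add V_add
  show ?thesis
    unfolding NS_algebra_def tens_prec_def tens_succ_def tens_vee_def
  proof (intro conjI allI bilinear_map_tens_op s vector_space_tscale bL bR bV)
    show "tens_op (\<lambda>a b. L b) (tens_op (\<lambda>a b. L b) x y) z =
      tens_op (\<lambda>a b. L b) x (tens_op (\<lambda>a b. L b) y z + tens_op (\<lambda>a b. R a) y z + tens_op V y z)" for x y z
      by (simp only: expand) (simp add: prec_prec biadditive_add[OF L_add])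
    show "tens_op (\<lambda>a b. L b) (tens_op (\<lambda>a b. R a) x y) z =
      tens_op (\<lambda>a b. R a) x (tens_op (\<lambda>a b. L b) y z)" for x y z
      by (simp only: expand) (simp add: succ_prec)
    show "tens_op (\<lambda>a b. R a) (tens_op (\<lambda>a b. L b) x y + tens_op (\<lambda>a b. R a) x y + tens_op V x y) z =
      tens_op (\<lambda>a b. R a) x (tens_op (\<lambda>a b. R a) y z)" for x y z
      by (simp only: expand) (simp add: succ_succ[symmetric] biadditive_add[OF R_add])
    show "tens_op V (tens_op (\<lambda>a b. L b) x y + tens_op (\<lambda>a b. R a) x y + tens_op V x y) z +
        tens_op (\<lambda>a b. L b) (tens_op V x y) z =
      tens_op (\<lambda>a b. R a) x (tens_op V y z) +
        tens_op V x (tens_op (\<lambda>a b. L b) y z + tens_op (\<lambda>a b. R a) y z + tens_op V y z)" for x y z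
      by (simp only: expand)
        (simp add: add.assoc vee[unfolded biadditive_add[OF V_add] biadditive_add[OF L_add] add.assoc])
  qed
qed

lemma NS_morphism_tens_map:
  assumes "NS_family_algebra s' L' R' V'" and "NS_family_morphism s s' f L R V L' R' V'"
  shows "NS_morphism (tscale s) (tscale s') (tens_map f)
           (tens_prec L) (tens_succ R) (tens_vee V) (tens_prec L') (tens_succ R') (tens_vee V')"
proof -
  have "\<And>a. bilinear_map s' (L' a)" and "\<And>a. bilinear_map s' (R' a)" and "\<And>a b. bilinear_map s' (V' a b)"
    using assms(1) unfolding NS_family_algebra_def by simp_all
  then have L'_add: "\<And>a. biadditive (L' a)" and R'_add: "\<And>a. biadditive (R' a)"
    and V'_add: "\<And>a b. biadditive (V' a b)"
    by (blast intro: bilinear_map_imp_biadditive)+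
  have f: "Vector_Spaces.linear s s' f"
    and hom_L: "\<And>x y a. f (L a x y) = L' a (f x) (f y)" and hom_R: "\<And>x y a. f (R a x y) = R' a (f x) (f y)"
    and hom_V: "\<And>x y a b. f (V a b x y) = V' a b (f x) (f y)"
    using assms(2) unfolding NS_family_morphism_def by simp_all
  have f_add: "Modules.additive f"
    using f unfolding Vector_Spaces.linear_iff by (simp add: additive.intro)
  show ?thesis
    unfolding NS_morphism_def tens_prec_def tens_succ_def tens_vee_def
  proof (intro conjI allI linear_tens_map f)
    show "tens_map f (tens_op (\<lambda>a b. L b) x y) = tens_op (\<lambda>a b. L' b) (tens_map f x) (tens_map f y)" for x y
      by (intro tens_map_tens_op f_add L'_add hom_L)
    show "tens_map f (tens_op (\<lambda>a b. R a) x y) = tens_op (\<lambda>a b. R' a) (tens_map f x) (tens_map f y)" for x y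
      by (intro tens_map_tens_op f_add R'_add hom_R)
    show "tens_map f (tens_op V x y) = tens_op V' (tens_map f x) (tens_map f y)" for x y
      by (intro tens_map_tens_op f_add V'_add hom_V)
  qed
qed

theorem theorem3p13:
  fixes s :: "'k::field_char_0 \<Rightarrow> 'd::ab_group_add \<Rightarrow> 'd"
    and s' :: "'k \<Rightarrow> 'e::ab_group_add \<Rightarrow> 'e"
    and L R :: "'o::semigroup_mult \<Rightarrow> 'd \<Rightarrow> 'd \<Rightarrow> 'd" and V :: "'o \<Rightarrow> 'o \<Rightarrow> 'd \<Rightarrow> 'd \<Rightarrow> 'd"
    and L' R' :: "'o \<Rightarrow> 'e \<Rightarrow> 'e \<Rightarrow> 'e" and V' :: "'o \<Rightarrow> 'o \<Rightarrow> 'e \<Rightarrow> 'e \<Rightarrow> 'e"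
    and f :: "'d \<Rightarrow> 'e"
  assumes "NS_family_algebra s L R V"
  shows "NS_algebra (tscale s) (tens_prec L) (tens_succ R) (tens_vee V) \<and>
         (NS_family_algebra s' L' R' V' \<longrightarrow> NS_family_morphism s s' f L R V L' R' V' \<longrightarrow>
          NS_morphism (tscale s) (tscale s') (tens_map f)
            (tens_prec L) (tens_succ R) (tens_vee V) (tens_prec L') (tens_succ R') (tens_vee V'))"
  using NS_algebra_tens[OF assms] NS_morphism_tens_map by blast

end
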